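(* Suppose the adversary's distribution $\mathcal D_t$ of $s_t=(x_t,y_t)$ at round $t$ (given the history $s_{1:t-1}$) has $\sigma$-smooth $x$-marginal. Then for algorithm $\mathscr Q^{\mathrm{FTPL}}$ with parameter $n$, $$\chi^2\big(\mathbb E_{s_t\sim\mathcal D_t}[\mathcal Q_{t+1}],\mathcal Q_t\big)\le\frac{2}{\sigma n}.$$
   Context: $\mathcal X$ is a finite set with uniform base measure; a distribution $\mathcal D$ on $\mathcal X$ is $\sigma$-smooth if $\mathcal D(x)\le\frac{1}{\sigma|\mathcal X|}$ for all $x$. Algorithm $\mathscr Q^{\mathrm{FTPL}}$ for a class $\mathcal F\subseteq\{\mathcal X\to[0,1]\}$ with parameters $n,\alpha$: at each round $t$, draw $N^{(t)}\sim\mathrm{Poi}(n)$ and fresh i.i.d. hallucinated samples uniform on $\mathcal X\times\{0,1\}$; set $\tilde h_t=\mathrm{OPT}(\text{hallucinated samples}\cup\{s_\tau\}_{\tau<t})$, where $\mathrm{OPT}$ returns an empirical log-loss minimizer over $\mathcal F$ as a deterministic function of the data multiset; the learner's hypothesis is $h_t=\frac{\tilde h_t+\alpha}{1+2\alpha}$. $\mathcal Q_t$ is the distribution of $h_t$ given $s_{1:t-1}$, $\mathcal Q_{t+1}$ the distribution of $h_{t+1}$ given $s_{1:t}$, and $\mathbb E_{s_t\sim\mathcal D_t}[\mathcal Q_{t+1}]$ the mixture over $s_t$. $\chi^2(P,Q)=\mathbb E_Q[(dP/dQ-1)^2]$. *)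

theory Defs
  imports "HOL-Probability.Probability" "HOL-Library.Multiset"
begin

definition neg_log :: "real \<Rightarrow> ereal" where
  "neg_log p = (if p \<le> 0 then \<infinity> else ereal (- ln p))"

definition log_loss :: "('x \<Rightarrow> real) \<Rightarrow> 'x \<times> bool \<Rightarrow> ereal" where
  "log_loss h s = (if snd s then neg_log (h (fst s)) else neg_log (1 - h (fst s)))"

definition emp_log_loss :: "('x \<Rightarrow> real) \<Rightarrow> ('x \<times> bool) multiset \<Rightarrow> ereal" where
  "emp_log_loss h S = sum_mset (image_mset (log_loss h) S)"

definition is_OPT :: "('x \<Rightarrow> real) set \<Rightarrow> (('x \<times> bool) multiset \<Rightarrow> ('x \<Rightarrow> real)) \<Rightarrow> bool" where
  "is_OPT F OPT \<longleftrightarrow> (\<forall>S. OPT S \<in> F \<and> (\<forall>f\<in>F. emp_log_loss (OPT S) S \<le> emp_log_loss f S))"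

definition hallucinated :: "real \<Rightarrow> ('x::finite \<times> bool) multiset pmf" where
  "hallucinated n = bind_pmf (poisson_pmf n) (\<lambda>N. map_pmf mset (replicate_pmf N (pmf_of_set UNIV)))"

definition ftpl_dist ::
  "(('x::finite \<times> bool) multiset \<Rightarrow> ('x \<Rightarrow> real)) \<Rightarrow> real \<Rightarrow> real \<Rightarrow> ('x \<times> bool) list \<Rightarrow> ('x \<Rightarrow> real) pmf" where
  "ftpl_dist OPT alpha n hist =
     map_pmf (\<lambda>H. (\<lambda>x. (OPT (H + mset hist) x + alpha) / (1 + 2 * alpha))) (hallucinated n)"

definition chi2 :: "'a pmf \<Rightarrow> 'a pmf \<Rightarrow> ennreal" where
  "chi2 P Q = (if set_pmf P \<subseteq> set_pmf Q
     then \<integral>\<^sup>+ h. ennreal ((pmf P h / pmf Q h - 1)^2) \<partial>(measure_pmf Q)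
     else \<top>)"

definition sigma_smooth :: "real \<Rightarrow> ('x::finite) pmf \<Rightarrow> bool" where
  "sigma_smooth \<sigma> D \<longleftrightarrow> (\<forall>x. pmf D x \<le> 1 / (\<sigma> * real CARD('x)))"

end

theory Submission
  imports Defs "HOL-Combinatorics.Multiset_Permutations"
begin

text \<open>The hallucinated multiset is a Poisson process on \<open>X \<times> {0,1}\<close> with intensity
  \<open>\<lambda> = n / (2|X|)\<close> at every point. Adding one sample drawn from \<open>D\<close> multiplies its law by the
  likelihood ratio \<open>\<Sum>\<^sub>s D(s) count\<^sub>H(s) / \<lambda>\<close>, whose second moment is \<open>1 + \<Sum>\<^sub>s D(s)\<^sup>2 / \<lambda>\<close> because
  under the shifted law the count at \<open>s\<close> has mean \<open>\<lambda> + D(s)\<close>. By \<open>\<sigma>\<close>-smoothness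
  \<open>\<Sum>\<^sub>s D(s)\<^sup>2 \<le> max\<^sub>s D(s) \<le> 1/(\<sigma>|X|)\<close>, so the \<open>\<chi>\<^sup>2\<close>-divergence between the two multiset laws
  is at most \<open>2/(\<sigma>n)\<close>. The learner's hypothesis is a deterministic function of the multiset, and
  \<open>\<chi>\<^sup>2\<close> does not increase under such maps.\<close>

text \<open>The second moment \<open>E\<^sub>Q[(dP/dQ)\<^sup>2]\<close> of the likelihood ratio, written as \<open>E\<^sub>P[dP/dQ]\<close>.\<close>
definition ratio_moment :: "'a pmf \<Rightarrow> 'a pmf \<Rightarrow> ennreal" where
  "ratio_moment P Q = (\<integral>\<^sup>+ x. ennreal (pmf P x / pmf Q x) \<partial>measure_pmf P)"

lemma nn_integral_pmf_eq_1: "(\<integral>\<^sup>+ x. ennreal (pmf P x) \<partial>count_space UNIV) = 1"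
  by (simp add: nn_integral_pmf measure_pmf.emeasure_space_1[simplified])

lemma chi2_plus_one:
  assumes "set_pmf P \<subseteq> set_pmf Q"
  shows "chi2 P Q + 1 = ratio_moment P Q"
proof -
  have pointwise: "ennreal (pmf Q x) * ennreal ((pmf P x / pmf Q x - 1)\<^sup>2) + 2 * ennreal (pmf P x)
      = ennreal (pmf P x) * ennreal (pmf P x / pmf Q x) + ennreal (pmf Q x)" for x
  proof -
    define p q where "p = pmf P x" and "q = pmf Q x"
    have "p \<ge> 0" "q \<ge> 0" unfolding p_def q_def by auto
    moreover have "q = 0 \<Longrightarrow> p = 0"
      using assms unfolding p_def q_def by (auto simp: set_pmf_iff)
    then have "q * (p / q - 1)\<^sup>2 + 2 * p = p * (p / q) + q"
      by (cases "q = 0") (simp_all add: field_simps power2_eq_square)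
    ultimately show ?thesis
      unfolding p_def[symmetric] q_def[symmetric]
      by (metis ennreal_mult' ennreal_plus ennreal_numeral divide_nonneg_nonneg mult_nonneg_nonneg
            zero_le_power2 zero_le_numeral)
  qed
  have "chi2 P Q + 1 + 1 = (\<integral>\<^sup>+ x. ennreal (pmf Q x) * ennreal ((pmf P x / pmf Q x - 1)\<^sup>2) \<partial>count_space UNIV)
      + 2 * (\<integral>\<^sup>+ x. ennreal (pmf P x) \<partial>count_space UNIV)"
    using assms by (simp add: chi2_def nn_integral_measure_pmf nn_integral_pmf_eq_1 one_add_one add.assoc)
  also have "\<dots> = (\<integral>\<^sup>+ x. ennreal (pmf P x) * ennreal (pmf P x / pmf Q x) + ennreal (pmf Q x) \<partial>count_space UNIV)"
    by (simp add: nn_integral_add nn_integral_cmult pointwise[symmetric])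
  also have "\<dots> = ratio_moment P Q + 1"
    by (simp add: nn_integral_add ratio_moment_def nn_integral_measure_pmf nn_integral_pmf_eq_1)
  finally have "1 + (chi2 P Q + 1) = 1 + ratio_moment P Q"
    by (simp only: add.commute)
  then show ?thesis
    unfolding ennreal_add_left_cancel by simp
qed

lemma nn_integral_le_ratio_moment:
  assumes "set_pmf P \<subseteq> set_pmf Q" and "\<And>x. 0 \<le> c x"
  shows "2 * (\<integral>\<^sup>+ x. ennreal (c x) \<partial>measure_pmf P)
           \<le> ratio_moment P Q + (\<integral>\<^sup>+ x. ennreal ((c x)\<^sup>2) \<partial>measure_pmf Q)"
proof -
  have am_gm: "2 * (ennreal (pmf P x) * ennreal (c x))
      \<le> ennreal (pmf P x) * ennreal (pmf P x / pmf Q x) + ennreal (pmf Q x) * ennreal ((c x)\<^sup>2)" for x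
  proof -
    define p q where "p = pmf P x" and "q = pmf Q x"
    have "p \<ge> 0" "q \<ge> 0" "c x \<ge> 0" unfolding p_def q_def using assms(2) by auto
    moreover have "q = 0 \<Longrightarrow> p = 0"
      using assms(1) unfolding p_def q_def by (auto simp: set_pmf_iff)
    then have "2 * (p * c x) \<le> p * (p / q) + q * (c x)\<^sup>2"
    proof (cases "q = 0")
      case False
      with \<open>q \<ge> 0\<close> have "p * (p / q) + q * (c x)\<^sup>2 - 2 * (p * c x) = (p - q * c x)\<^sup>2 / q"
        by (simp add: field_simps power2_eq_square)
      also have "\<dots> \<ge> 0" using \<open>q \<ge> 0\<close> by simp
      finally show ?thesis by simp
    qed simp
    ultimately show ?thesis
      unfolding p_def[symmetric] q_def[symmetric]
      by (metis ennreal_leI ennreal_mult' ennreal_plus ennreal_numeral divide_nonneg_nonneg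
            mult_nonneg_nonneg zero_le_power2 zero_le_numeral)
  qed
  have "2 * (\<integral>\<^sup>+ x. ennreal (c x) \<partial>measure_pmf P)
      = (\<integral>\<^sup>+ x. 2 * (ennreal (pmf P x) * ennreal (c x)) \<partial>count_space UNIV)"
    by (simp add: nn_integral_cmult nn_integral_measure_pmf)
  also have "\<dots> \<le> (\<integral>\<^sup>+ x. ennreal (pmf P x) * ennreal (pmf P x / pmf Q x)
      + ennreal (pmf Q x) * ennreal ((c x)\<^sup>2) \<partial>count_space UNIV)"
    by (intro nn_integral_mono am_gm)
  also have "\<dots> = ratio_moment P Q + (\<integral>\<^sup>+ x. ennreal ((c x)\<^sup>2) \<partial>measure_pmf Q)"
    by (simp add: nn_integral_add ratio_moment_def nn_integral_measure_pmf)
  finally show ?thesis .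
qed

lemma nn_integral_square_le_if_le_ratio:
  assumes "\<And>x. 0 \<le> c x" and "\<And>x. c x \<le> pmf P x / pmf Q x"
  shows "(\<integral>\<^sup>+ x. ennreal ((c x)\<^sup>2) \<partial>measure_pmf Q) \<le> (\<integral>\<^sup>+ x. ennreal (c x) \<partial>measure_pmf P)"
proof -
  have "pmf Q x * (c x)\<^sup>2 \<le> pmf P x * c x" for x
  proof (cases "pmf Q x = 0")
    case False
    then have "pmf Q x * c x \<le> pmf P x"
      using assms(2)[of x] by (simp add: pos_le_divide_eq mult.commute)
    then show ?thesis
      using assms(1)[of x] by (simp add: power2_eq_square mult.assoc[symmetric] mult_right_mono)
  qed (use assms(1) in simp)
  then have "ennreal (pmf Q x) * ennreal ((c x)\<^sup>2) \<le> ennreal (pmf P x) * ennreal (c x)" for x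
    using assms(1)[of x] by (simp add: ennreal_mult'[symmetric] ennreal_leI)
  then show ?thesis
    by (simp add: nn_integral_measure_pmf nn_integral_mono)
qed

text \<open>For \<open>X\<close> the mean of \<open>min t k\<close> under \<open>map_pmf g P\<close>, with \<open>t\<close> the
  likelihood ratio of the images, the two lemmas above give \<open>2X \<le> ratio_moment P Q + X\<close>; the truncation makes \<open>X\<close> finite so it
  cancels, and monotone convergence in \<open>k\<close> removes it.\<close>
lemma ratio_moment_map_pmf_le:
  assumes "set_pmf P \<subseteq> set_pmf Q"
  shows "ratio_moment (map_pmf g P) (map_pmf g Q) \<le> ratio_moment P Q"
proof -
  define t where "t y = pmf (map_pmf g P) y / pmf (map_pmf g Q) y" for y
  define X where "X k = (\<integral>\<^sup>+ y. ennreal (min (t y) (real k)) \<partial>measure_pmf (map_pmf g P))" for k :: nat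
  have t_nonneg: "t y \<ge> 0" for y unfolding t_def by simp
  have "X k \<le> ratio_moment P Q" for k
  proof -
    let ?c = "\<lambda>y. min (t y) (real k)"
    have "2 * X k \<le> ratio_moment P Q + (\<integral>\<^sup>+ x. ennreal ((?c (g x))\<^sup>2) \<partial>measure_pmf Q)"
      using nn_integral_le_ratio_moment[OF assms, of "?c \<circ> g"] t_nonneg
      by (simp add: X_def nn_integral_map_pmf)
    also have "(\<integral>\<^sup>+ x. ennreal ((?c (g x))\<^sup>2) \<partial>measure_pmf Q) \<le> X k"
      using nn_integral_square_le_if_le_ratio[of ?c "map_pmf g P" "map_pmf g Q"] t_nonneg
      by (simp add: X_def nn_integral_map_pmf t_def)
    finally have "X k + X k \<le> X k + ratio_moment P Q"
      by (simp add: mult_2 add.commute)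
    moreover have "X k \<le> (\<integral>\<^sup>+ y. ennreal (real k) \<partial>measure_pmf (map_pmf g P))"
      unfolding X_def by (intro nn_integral_mono ennreal_leI) simp
    then have "X k \<le> ennreal (real k)"
      by (simp add: measure_pmf.emeasure_space_1)
    then have "X k \<noteq> \<top>"
      by (rule neq_top_trans[OF ennreal_neq_top])
    ultimately show ?thesis
      by (simp add: ennreal_add_left_cancel_le)
  qed
  moreover have "ratio_moment (map_pmf g P) (map_pmf g Q) = (SUP k. X k)"
  proof -
    have "(SUP k. ennreal (min (t y) (real k))) = ennreal (t y)" for y
    proof (rule antisym)
      show "(SUP k. ennreal (min (t y) (real k))) \<le> ennreal (t y)"
        by (rule SUP_least) (simp add: ennreal_leI)
      have "ennreal (t y) = ennreal (min (t y) (real (nat \<lceil>t y\<rceil>)))"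
        by (simp add: min_def) linarith
      also have "\<dots> \<le> (SUP k. ennreal (min (t y) (real k)))"
        by (rule SUP_upper) simp
      finally show "ennreal (t y) \<le> (SUP k. ennreal (min (t y) (real k)))" .
    qed
    then have "ratio_moment (map_pmf g P) (map_pmf g Q)
        = (\<integral>\<^sup>+ y. (SUP k. ennreal (min (t y) (real k))) \<partial>measure_pmf (map_pmf g P))"
      by (simp add: ratio_moment_def t_def)
    also have "\<dots> = (SUP k. X k)"
      unfolding X_def
      by (rule nn_integral_monotone_convergence_SUP)
         (auto intro!: monoI le_funI ennreal_leI)
    finally show ?thesis .
  qed
  ultimately show ?thesis by (simp add: SUP_least)
qed

text \<open>The law of the hallucinated samples on an arbitrary finite sample space: a Poisson
  process of intensity \<open>n / CARD('a)\<close> at every point.\<close>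
definition poisson_sample :: "real \<Rightarrow> 'a::finite multiset pmf" where
  "poisson_sample n = bind_pmf (poisson_pmf n) (\<lambda>N. map_pmf mset (replicate_pmf N (pmf_of_set UNIV)))"

lemma pmf_replicate_pmf:
  "pmf (replicate_pmf N p) xs = (if length xs = N then (\<Prod>x\<leftarrow>xs. pmf p x) else 0)"
proof (induction N arbitrary: xs)
  case 0
  then show ?case by (auto simp: pmf_return)
next
  case (Suc N)
  have cons: "replicate_pmf (Suc N) p = map_pmf (\<lambda>(x, ys). x # ys) (pair_pmf p (replicate_pmf N p))"
    by (simp add: pair_pmf_def map_bind_pmf bind_return_pmf map_pmf_def bind_assoc_pmf)
  have inj: "inj (\<lambda>(x, ys). x # ys)" by (auto simp: inj_def)
  show ?case
  proof (cases xs)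
    case Nil
    then show ?thesis unfolding cons by (subst pmf_map_outside) auto
  next
    case (Cons y ys)
    have "pmf (replicate_pmf (Suc N) p) xs = pmf (pair_pmf p (replicate_pmf N p)) (y, ys)"
      unfolding cons Cons using pmf_map_inj'[OF inj, of _ "(y, ys)"] by simp
    then show ?thesis using Suc by (simp add: Cons pmf_pair)
  qed
qed

lemma pmf_mset_replicate_uniform:
  fixes M :: "'a::finite multiset"
  shows "pmf (map_pmf mset (replicate_pmf N (pmf_of_set UNIV))) M =
           (if size M = N then real (card (permutations_of_multiset M)) / real CARD('a) ^ N else 0)"
proof -
  have uniform: "pmf (pmf_of_set (UNIV :: 'a set)) = (\<lambda>_. 1 / real CARD('a))"
    by auto
  have "pmf (map_pmf mset (replicate_pmf N (pmf_of_set UNIV))) M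
      = measure_pmf.prob (replicate_pmf N (pmf_of_set UNIV)) (permutations_of_multiset M)"
    by (simp add: pmf_map permutations_of_multiset_def vimage_def)
  also have "\<dots> = (\<Sum>xs\<in>permutations_of_multiset M. pmf (replicate_pmf N (pmf_of_set UNIV)) xs)"
    by (simp add: measure_measure_pmf_finite)
  also have "\<dots> = (\<Sum>xs\<in>permutations_of_multiset M. if size M = N then 1 / real CARD('a) ^ N else 0)"
    by (intro sum.cong refl)
       (auto simp: pmf_replicate_pmf uniform length_finite_permutations_of_multiset map_replicate_const power_one_over)
  finally show ?thesis by simp
qed

lemma pmf_poisson_sample:
  fixes M :: "'a::finite multiset"
  assumes "0 < n"
  shows "pmf (poisson_sample n) M = n ^ size M / fact (size M) * exp (- n) *
           real (card (permutations_of_multiset M)) / real CARD('a) ^ size M"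
proof -
  have "pmf (poisson_sample n) M = (\<Sum>N\<in>{size M}.
          pmf (map_pmf mset (replicate_pmf N (pmf_of_set UNIV))) M * pmf (poisson_pmf n) N)"
    unfolding poisson_sample_def pmf_bind
    by (rule integral_measure_pmf_real) (auto simp: pmf_mset_replicate_uniform split: if_splits)
  then show ?thesis using assms by (simp add: pmf_mset_replicate_uniform field_simps)
qed

lemma pmf_poisson_sample_add_mset:
  fixes M :: "'a::finite multiset"
  assumes "0 < n"
  shows "real (count M a + 1) * pmf (poisson_sample n) (add_mset a M) =
           n / real CARD('a) * pmf (poisson_sample n) M"
proof -
  have perms: "real (card (permutations_of_multiset (add_mset a M))) * real (count M a + 1) =
      (real (size M) + 1) * real (card (permutations_of_multiset M))"
    using card_permutations_of_multiset_insert_aux[of M a]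
    by (metis add_mset_add_single of_nat_1 of_nat_add of_nat_mult)
  define N where "N = size M"
  define K where "K = real CARD('a)"
  define R where "R = real N + 1"
  have R_pos: "R > 0" unfolding R_def by simp
  have "real (count M a + 1) * pmf (poisson_sample n) (add_mset a M) =
      n ^ Suc N * exp (- n) *
        (real (card (permutations_of_multiset (add_mset a M))) * real (count M a + 1)) /
        (fact (Suc N) * K ^ Suc N)"
    using assms by (simp add: pmf_poisson_sample N_def K_def field_simps)
  also have "\<dots> = n ^ Suc N * exp (- n) * (R * real (card (permutations_of_multiset M))) /
        (R * fact N * K ^ Suc N)"
    by (simp only: perms R_def N_def fact_Suc of_nat_mult of_nat_Suc add.commute[of 1])
  also have "\<dots> = n / K * pmf (poisson_sample n) M"
    using assms R_pos by (simp add: pmf_poisson_sample N_def K_def field_simps)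
  finally show ?thesis unfolding K_def .
qed

lemma pmf_map_add_mset_poisson_sample:
  fixes M :: "'a::finite multiset"
  assumes "0 < n"
  shows "pmf (map_pmf (add_mset a) (poisson_sample n)) M =
           real (count M a) / (n / real CARD('a)) * pmf (poisson_sample n) M"
proof (cases "a \<in># M")
  case True
  then obtain M' where M: "M = add_mset a M'" by (metis multi_member_split)
  have "pmf (map_pmf (add_mset a) (poisson_sample n)) M = pmf (poisson_sample n) M'"
    unfolding M by (rule pmf_map_inj') (auto simp: inj_def)
  then show ?thesis
    using pmf_poisson_sample_add_mset[OF assms, of M' a] assms unfolding M by (simp add: field_simps)
next
  case False
  then have "pmf (map_pmf (add_mset a) (poisson_sample n)) M = 0"
    by (intro pmf_map_outside) auto
  with False show ?thesis by (simp add: not_in_iff)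
qed

definition poisson_sample_plus :: "'a pmf \<Rightarrow> real \<Rightarrow> 'a::finite multiset pmf" where
  "poisson_sample_plus D n = bind_pmf D (\<lambda>a. map_pmf (add_mset a) (poisson_sample n))"

lemma pmf_poisson_sample_plus:
  fixes D :: "'a::finite pmf"
  assumes "0 < n"
  shows "pmf (poisson_sample_plus D n) M =
           (\<Sum>a\<in>UNIV. pmf D a * real (count M a)) / (n / real CARD('a)) * pmf (poisson_sample n) M"
proof -
  have "pmf (poisson_sample_plus D n) M = (\<Sum>a\<in>UNIV. pmf (map_pmf (add_mset a) (poisson_sample n)) M * pmf D a)"
    unfolding poisson_sample_plus_def pmf_bind by (rule integral_measure_pmf_real) auto
  also have "\<dots> = (\<Sum>a\<in>UNIV. pmf D a * real (count M a) / (n / real CARD('a)) * pmf (poisson_sample n) M)"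
    using assms by (intro sum.cong refl) (simp add: pmf_map_add_mset_poisson_sample field_simps)
  finally show ?thesis
    by (simp add: sum_divide_distrib sum_distrib_right)
qed

lemma set_pmf_poisson_sample_plus_subset:
  assumes "0 < n"
  shows "set_pmf (poisson_sample_plus D n) \<subseteq> set_pmf (poisson_sample n)"
  using assms by (auto simp: set_pmf_iff pmf_poisson_sample_plus)

lemma nn_integral_count_poisson_sample:
  fixes a :: "'a::finite"
  assumes "0 < n"
  shows "(\<integral>\<^sup>+ M. ennreal (real (count M a)) \<partial>measure_pmf (poisson_sample n)) = ennreal (n / real CARD('a))"
proof -
  define lam where "lam = n / real CARD('a)"
  have "lam > 0" unfolding lam_def using assms by simp
  have "pmf (poisson_sample n) M * real (count M a) = pmf (map_pmf (add_mset a) (poisson_sample n)) M * lam" for M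
    using assms pmf_map_add_mset_poisson_sample[OF assms, of a M] by (simp add: lam_def)
  then have "ennreal (pmf (poisson_sample n) M) * ennreal (real (count M a))
      = ennreal (pmf (map_pmf (add_mset a) (poisson_sample n)) M) * ennreal lam" for M
    using \<open>lam > 0\<close> by (simp add: ennreal_mult'[symmetric])
  then have "(\<integral>\<^sup>+ M. ennreal (real (count M a)) \<partial>measure_pmf (poisson_sample n))
      = (\<integral>\<^sup>+ M. ennreal (pmf (map_pmf (add_mset a) (poisson_sample n)) M) \<partial>count_space UNIV) * ennreal lam"
    by (simp add: nn_integral_measure_pmf nn_integral_multc)
  then show ?thesis by (simp add: nn_integral_pmf_eq_1 lam_def)
qed

lemma nn_integral_count_poisson_sample_plus:
  fixes a :: "'a::finite"
  assumes "0 < n"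
  shows "(\<integral>\<^sup>+ M. ennreal (real (count M a)) \<partial>measure_pmf (poisson_sample_plus D n))
           = ennreal (n / real CARD('a) + pmf D a)"
proof -
  have "ennreal (real (count (add_mset b M) a)) = ennreal (real (count M a)) + indicator {a} b" for b M
    by (cases "b = a") (auto simp: ennreal_plus[symmetric])
  then have "(\<integral>\<^sup>+ M. ennreal (real (count M a)) \<partial>measure_pmf (poisson_sample_plus D n))
      = (\<integral>\<^sup>+ b. ennreal (n / real CARD('a)) + indicator {a} b \<partial>measure_pmf D)"
    by (simp add: poisson_sample_plus_def nn_integral_bind_pmf nn_integral_map_pmf nn_integral_add
          nn_integral_count_poisson_sample[OF assms] measure_pmf.emeasure_space_1)
  also have "\<dots> = ennreal (n / real CARD('a) + pmf D a)"
    using assms by (simp add: nn_integral_add measure_pmf.emeasure_space_1 emeasure_pmf_single ennreal_plus)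
  finally show ?thesis .
qed

lemma ratio_moment_poisson_sample_plus:
  fixes D :: "'a::finite pmf"
  assumes "0 < n"
  shows "ratio_moment (poisson_sample_plus D n) (poisson_sample n)
           = 1 + ennreal (real CARD('a) / n * (\<Sum>a\<in>UNIV. (pmf D a)\<^sup>2))"
proof -
  define lam where "lam = n / real CARD('a)"
  have "lam > 0" unfolding lam_def using assms by simp
  have ratio: "ennreal (pmf (poisson_sample_plus D n) M / pmf (poisson_sample n) M)
      = (\<Sum>a\<in>UNIV. ennreal (pmf D a / lam) * ennreal (real (count M a)))"
    if "M \<in> set_pmf (poisson_sample_plus D n)" for M
  proof -
    have "M \<in> set_pmf (poisson_sample n)"
      using that set_pmf_poisson_sample_plus_subset[OF assms] by blast
    then have "pmf (poisson_sample n) M \<noteq> 0"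
      by (simp add: set_pmf_iff)
    then have "pmf (poisson_sample_plus D n) M / pmf (poisson_sample n) M
        = (\<Sum>a\<in>UNIV. pmf D a * real (count M a)) / lam"
      by (simp add: pmf_poisson_sample_plus[OF assms] lam_def)
    also have "\<dots> = (\<Sum>a\<in>UNIV. pmf D a / lam * real (count M a))"
      by (simp add: sum_divide_distrib)
    finally have "ennreal (pmf (poisson_sample_plus D n) M / pmf (poisson_sample n) M)
        = ennreal (\<Sum>a\<in>UNIV. pmf D a / lam * real (count M a))"
      by (rule arg_cong)
    also have "\<dots> = (\<Sum>a\<in>UNIV. ennreal (pmf D a / lam * real (count M a)))"
      using \<open>lam > 0\<close> by (intro sum_ennreal[symmetric]) simp
    also have "\<dots> = (\<Sum>a\<in>UNIV. ennreal (pmf D a / lam) * ennreal (real (count M a)))"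
      by (intro sum.cong refl ennreal_mult'') simp
    finally show ?thesis .
  qed
  have "ratio_moment (poisson_sample_plus D n) (poisson_sample n)
      = (\<integral>\<^sup>+ M. (\<Sum>a\<in>UNIV. ennreal (pmf D a / lam) * ennreal (real (count M a)))
           \<partial>measure_pmf (poisson_sample_plus D n))"
    unfolding ratio_moment_def by (intro nn_integral_cong_AE AE_pmfI) (simp add: ratio)
  also have "\<dots> = (\<Sum>a\<in>UNIV. ennreal (pmf D a / lam) * ennreal (lam + pmf D a))"
    by (simp add: nn_integral_sum nn_integral_cmult nn_integral_count_poisson_sample_plus[OF assms] lam_def)
  also have "\<dots> = (\<Sum>a\<in>UNIV. ennreal (pmf D a / lam * (lam + pmf D a)))"
    using \<open>lam > 0\<close> by (intro sum.cong refl ennreal_mult''[symmetric]) simp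
  also have "\<dots> = ennreal (\<Sum>a\<in>UNIV. pmf D a / lam * (lam + pmf D a))"
    using \<open>lam > 0\<close> by (intro sum_ennreal) simp
  also have "(\<Sum>a\<in>UNIV. pmf D a / lam * (lam + pmf D a))
      = (\<Sum>a\<in>UNIV. pmf D a) + real CARD('a) / n * (\<Sum>a\<in>UNIV. (pmf D a)\<^sup>2)"
  proof -
    have "pmf D a / lam * (lam + pmf D a) = pmf D a + real CARD('a) / n * (pmf D a)\<^sup>2" for a
      using \<open>lam > 0\<close> assms by (simp add: lam_def field_simps power2_eq_square)
    then show ?thesis
      by (simp add: sum.distrib sum_distrib_left)
  qed
  also have "(\<Sum>a\<in>UNIV. pmf D a) = 1"
    by (rule sum_pmf_eq_1) auto
  finally show ?thesis
    using assms by (simp add: ennreal_plus sum_nonneg del: times_divide_eq_left times_divide_eq_right)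
qed

lemma pmf_le_pmf_map_pmf: "pmf p x \<le> pmf (map_pmf f p) (f x)"
proof -
  have "pmf p x = measure_pmf.prob p {x}" by (simp add: measure_pmf_single)
  also have "\<dots> \<le> measure_pmf.prob p (f -` {f x})"
    by (rule measure_pmf.finite_measure_mono) auto
  finally show ?thesis by (simp add: pmf_map)
qed

lemma sum_pmf_squared_le:
  fixes p :: "'a::finite pmf"
  assumes "\<And>x. pmf p x \<le> m"
  shows "(\<Sum>x\<in>UNIV. (pmf p x)\<^sup>2) \<le> m"
proof -
  have "(\<Sum>x\<in>UNIV. (pmf p x)\<^sup>2) \<le> (\<Sum>x\<in>UNIV. pmf p x * m)"
    by (intro sum_mono) (simp add: power2_eq_square assms mult_left_mono)
  also have "\<dots> = m"
    by (simp add: sum_distrib_right[symmetric] sum_pmf_eq_1)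
  finally show ?thesis .
qed

theorem lemma4p5:
  fixes F :: "('x::finite \<Rightarrow> real) set"
    and OPT :: "('x \<times> bool) multiset \<Rightarrow> ('x \<Rightarrow> real)"
    and D :: "('x \<times> bool) pmf"
    and hist :: "('x \<times> bool) list"
    and \<sigma> n alpha :: real
  assumes F_range: "\<forall>f\<in>F. \<forall>x. 0 \<le> f x \<and> f x \<le> 1"
    and OPT: "is_OPT F OPT"
    and sigma_pos: "0 < \<sigma>"
    and n_pos: "0 < n"
    and alpha_nonneg: "0 \<le> alpha"
    and smooth: "sigma_smooth \<sigma> (map_pmf fst D)"
  shows "chi2 (bind_pmf D (\<lambda>s. ftpl_dist OPT alpha n (hist @ [s])))
              (ftpl_dist OPT alpha n hist)
         \<le> ennreal (2 / (\<sigma> * n))"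
proof -
  define h where "h H = (\<lambda>x. (OPT (H + mset hist) x + alpha) / (1 + 2 * alpha))" for H
  have Q: "ftpl_dist OPT alpha n hist = map_pmf h (poisson_sample n)"
    unfolding ftpl_dist_def h_def hallucinated_def poisson_sample_def ..
  have P: "bind_pmf D (\<lambda>s. ftpl_dist OPT alpha n (hist @ [s])) = map_pmf h (poisson_sample_plus D n)"
    unfolding poisson_sample_plus_def map_bind_pmf map_pmf_comp Q[symmetric]
    by (simp add: ftpl_dist_def h_def hallucinated_def poisson_sample_def map_pmf_comp ac_simps)
  have "pmf D s \<le> 1 / (\<sigma> * real CARD('x))" for s
    using pmf_le_pmf_map_pmf[of D s fst] smooth unfolding sigma_smooth_def by (meson order_trans)
  then have "(\<Sum>s\<in>UNIV. (pmf D s)\<^sup>2) \<le> 1 / (\<sigma> * real CARD('x))"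
    by (rule sum_pmf_squared_le)
  then have bound: "real CARD('x \<times> bool) / n * (\<Sum>s\<in>UNIV. (pmf D s)\<^sup>2) \<le> 2 / (\<sigma> * n)"
    using sigma_pos n_pos by (simp add: field_simps)
  note sub = set_pmf_poisson_sample_plus_subset[OF n_pos, of D]
  then have "set_pmf (map_pmf h (poisson_sample_plus D n)) \<subseteq> set_pmf (map_pmf h (poisson_sample n))"
    by auto
  then have "chi2 (map_pmf h (poisson_sample_plus D n)) (map_pmf h (poisson_sample n)) + 1
      = ratio_moment (map_pmf h (poisson_sample_plus D n)) (map_pmf h (poisson_sample n))"
    by (rule chi2_plus_one)
  also have "\<dots> \<le> ratio_moment (poisson_sample_plus D n) (poisson_sample n)"
    by (rule ratio_moment_map_pmf_le[OF sub])
  also have "\<dots> = 1 + ennreal (real CARD('x \<times> bool) / n * (\<Sum>s\<in>UNIV. (pmf D s)\<^sup>2))"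
    by (rule ratio_moment_poisson_sample_plus[OF n_pos])
  also have "\<dots> \<le> 1 + ennreal (2 / (\<sigma> * n))"
    using bound by (intro add_left_mono ennreal_leI)
  finally show ?thesis
    unfolding P Q by (simp add: ennreal_add_left_cancel_le add.commute[of _ 1])
qed

end
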